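(* The subgroup of $G$ consisting of those elements that fix $Q\in\Lambda^2H_\Gamma$ is generated by the standard dominated $Q$-transvections and the $Q$-inversions.
   Context: $\Gamma$ is a finite simplicial graph with vertex set $X$, $|X|=2g$, $A_\Gamma$ its right-angled Artin group ($x,y$ commute iff adjacent), $H_\Gamma$ its abelianization, $L=X\cup X^{-1}$, and for $u\in L$, $\bar u\in X$ is its vertex. $\mathrm{lk}(v)$ = neighbours of $v$, $\mathrm{st}(v)=\mathrm{lk}(v)\cup\{v\}$; domination $v\ge w$ iff $\mathrm{lk}(w)\subset\mathrm{st}(v)$, extended to letters via their vertices. Fix a bijection $u\mapsto u^*$ of $L$ with $(u^* )^*=u^{-1}$ and letters $a_1,\dots,a_g\in L$ such that the vertices of $a_1,\dots,a_g,a_1^*,\dots,a_g^*$ are all of $X$; let $Q=\sum\{[a_i]\wedge[a_i^*]: \bar a_i^*\text{ adjacent to }\bar a_i\}\in\Lambda^2H_\Gamma$ (with $\mathrm{Aut}\,H_\Gamma$ acting diagonally), and assume $Q\ne0$. $\mathrm{supp}\,Q\subset X$ is the set of vertices appearing in $Q$. A letter $u\in L$ also denotes its image in $H_\Gamma$ (so $x^{-1}\mapsto -x$). For $a,b\in L$ with $a\ge b$, $\bar a\neq\bar b$, $E_{a,b}\in\mathrm{Aut}\,H_\Gamma$ sends $b\mapsto b+a$ and fixes the images of all $x\in X$ other than $\bar b$; $N_a$ sends $a\mapsto -a$ and fixes images of all $x\in X\setminus\{\bar a\}$. $G\le\mathrm{Aut}\,H_\Gamma$ is generated by $\{E_{a,b}: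 a\in X, b\in\mathrm{supp}\,Q, a\ge b, a\ne b\}\cup\{N_b:b\in\mathrm{supp}\,Q\}$. A standard dominated $Q$-transvection is an element of one of the forms: (1) $E_{a,a^*}$ where $\bar a\in\mathrm{supp}\,Q$ and $a\ge a^*$; (2) $E_{a,b}E_{b^*,a^*}^{-1}$ where $\bar a,\bar b\in\mathrm{supp}\,Q$, $\bar a\neq \bar b$, $\bar{a^*}\ne\bar b$, $a\ge b$ and $b^*\ge a^*$. The $Q$-inversion for $\bar a\in\mathrm{supp}\,Q$ is $N_aN_{a^*}$. *)

theory Defs
  imports "HOL-Analysis.Analysis"
begin

text \<open>The vertex set X of the graph is the (finite) type 'v; the graph is an
  adjacency relation adj on 'v (symmetric, irreflexive).
  H_Gamma = Z^X is modelled by int^'v; Aut H_Gamma by invertible integer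
  matrices int^'v^'v acting on column vectors (A *v x).
  Letters L = X \<union> X^-1 are pairs (x, s) :: 'v \<times> bool, with s = True for x and
  s = False for x^-1.  The vertex of a letter u is fst u.
  Lambda^2 H_Gamma is modelled (canonically, for a free Z-module of finite rank)
  by skew-symmetric integer matrices: x \<and> y corresponds to x y^T - y x^T, and
  the diagonal action of A becomes M \<mapsto> A M A^T.\<close>

type_synonym 'v letter = "'v \<times> bool"

definition lsgn :: "'v letter \<Rightarrow> int" where
  "lsgn u = (if snd u then 1 else -1)"

definition linv :: "'v letter \<Rightarrow> 'v letter" where
  "linv u = (fst u, \<not> snd u)"

definition limg :: "'v letter \<Rightarrow> int^'v" where
  "limg u = (\<chi> i. if i = fst u then lsgn u else 0)"

definition wedge :: "int^'v \<Rightarrow> int^'v \<Rightarrow> int^'v^'v" where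
  "wedge x y = (\<chi> i j. x$i * y$j - y$i * x$j)"

definition act2 :: "int^'v^'v \<Rightarrow> int^'v^'v \<Rightarrow> int^'v^'v" where
  "act2 A M = A ** M ** transpose A"

definition suppW :: "int^'v^'v \<Rightarrow> 'v set" where
  "suppW M = {x. \<exists>y. M$x$y \<noteq> 0 \<or> M$y$x \<noteq> 0}"

definition is_graph :: "('v \<Rightarrow> 'v \<Rightarrow> bool) \<Rightarrow> bool" where
  "is_graph adj \<longleftrightarrow> (\<forall>x y. adj x y \<longrightarrow> adj y x) \<and> (\<forall>x. \<not> adj x x)"

text \<open>Domination v \<ge> w iff lk(w) \<subseteq> st(v).\<close>
definition vdom :: "('v \<Rightarrow> 'v \<Rightarrow> bool) \<Rightarrow> 'v \<Rightarrow> 'v \<Rightarrow> bool" where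
  "vdom adj v w \<longleftrightarrow> (\<forall>z. adj w z \<longrightarrow> adj v z \<or> z = v)"

definition ldom :: "('v \<Rightarrow> 'v \<Rightarrow> bool) \<Rightarrow> 'v letter \<Rightarrow> 'v letter \<Rightarrow> bool" where
  "ldom adj a b \<longleftrightarrow> vdom adj (fst a) (fst b)"

text \<open>E_{a,b}: sends b to b + a, fixes the other basis vectors (for fst a \<noteq> fst b).
  Column fst b is e_{fst b} + lsgn a * lsgn b * e_{fst a}.\<close>
definition Emat :: "'v letter \<Rightarrow> 'v letter \<Rightarrow> int^'v^'v" where
  "Emat a b = (\<chi> i j. if j = fst b \<and> i = fst a then lsgn a * lsgn b
                       else if i = j then 1 else 0)"

definition Nmat :: "'v letter \<Rightarrow> int^'v^'v" where
  "Nmat a = (\<chi> i j. if i = j then (if i = fst a then -1 else 1) else 0)"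

inductive_set mgen :: "(int^'v^'v) set \<Rightarrow> (int^'v^'v) set" for S where
  one: "mat 1 \<in> mgen S"
| mul: "s \<in> S \<Longrightarrow> g \<in> mgen S \<Longrightarrow> s ** g \<in> mgen S"
| mulinv: "s \<in> S \<Longrightarrow> g \<in> mgen S \<Longrightarrow> matrix_inv s ** g \<in> mgen S"

definition Qform :: "('v \<Rightarrow> 'v \<Rightarrow> bool) \<Rightarrow> ('v letter \<Rightarrow> 'v letter) \<Rightarrow> nat
    \<Rightarrow> (nat \<Rightarrow> 'v letter) \<Rightarrow> int^'v^'v" where
  "Qform adj st g a =
     (\<Sum>i\<in>{i. i < g \<and> adj (fst (st (a i))) (fst (a i))}. wedge (limg (a i)) (limg (st (a i))))"

definition Ggens :: "('v \<Rightarrow> 'v \<Rightarrow> bool) \<Rightarrow> int^'v^'v \<Rightarrow> (int^'v^'v) set" where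
  "Ggens adj Q =
     {Emat (x, True) (y, True) | x y. y \<in> suppW Q \<and> vdom adj x y \<and> x \<noteq> y}
     \<union> {Nmat (y, True) | y. y \<in> suppW Q}"

definition std_transv :: "('v \<Rightarrow> 'v \<Rightarrow> bool) \<Rightarrow> ('v letter \<Rightarrow> 'v letter)
    \<Rightarrow> int^'v^'v \<Rightarrow> (int^'v^'v) set" where
  "std_transv adj st Q =
     {Emat a (st a) | a. fst a \<in> suppW Q \<and> ldom adj a (st a)}
     \<union> {Emat a b ** matrix_inv (Emat (st b) (st a)) | a b.
          fst a \<in> suppW Q \<and> fst b \<in> suppW Q \<and> fst a \<noteq> fst b \<and> fst (st a) \<noteq> fst b
          \<and> ldom adj a b \<and> ldom adj (st b) (st a)}"

definition Q_inversions :: "('v letter \<Rightarrow> 'v letter) \<Rightarrow> int^'v^'v \<Rightarrow> (int^'v^'v) set" where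
  "Q_inversions st Q = {Nmat a ** Nmat (st a) | a. fst a \<in> suppW Q}"

end

theory Submission
  imports Defs
begin

text \<open>Write \<open>x*\<close> (\<open>partner x\<close>) for the vertex of \<open>(x,True)*\<close> and \<open>\<tau> x = \<plusminus>1\<close> (\<open>tau x\<close>) for
  the sign relating \<open>(x,True)*\<close> to \<open>x*\<close>.  Then \<open>*\<close> is a fixed-point-free involution on vertices, \<open>\<tau> (x*) = - \<tau> x\<close>,
  and \<open>Q\<close> is the skew matrix with \<open>Q[x,x*] = \<tau> x\<close> for \<open>x \<in> supp Q\<close> and zeros elsewhere.

  Every element \<open>A\<close> of \<open>G\<close> is the identity on the columns outside \<open>supp Q\<close>, and a nonzero
  off-diagonal entry \<open>A[r,s]\<close> forces \<open>s \<in> supp Q\<close> and \<open>r \<ge> s\<close>.  If \<open>A\<close> also fixes \<open>Q\<close>, then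
  \<open>A Q = Q A\<^sup>-\<^sup>T\<close> identifies \<open>A[r,s]\<close> with \<open>\<plusminus>A\<^sup>-\<^sup>1[s*,r*]\<close>, so it additionally forces
  \<open>s* \<ge> r*\<close>: exactly the domination making \<open>E\<^sub>r\<^sub>,\<^sub>s E\<^sub>s\<^sub>*\<^sub>,\<^sub>r\<^sub>*\<^sup>-\<^sup>1\<close> a standard dominated
  \<open>Q\<close>-transvection.  Such an \<open>A\<close> is then reduced to the identity by a Euclidean algorithm on
  columns: pick \<open>v\<close> maximal for this relation among the columns not yet reduced, clear
  column \<open>v\<close> with transvections and \<open>Q\<close>-inversions, then column \<open>v*\<close>, and recurse.\<close>

definition elementary :: "'n::finite \<Rightarrow> 'n \<Rightarrow> int \<Rightarrow> int^'n^'n" where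
  "elementary i j c = (\<chi> r s. (if r = s then 1 else 0) + (if r = i \<and> s = j then c else 0))"

definition unit_column :: "int^'n^'n \<Rightarrow> 'n \<Rightarrow> bool" where
  "unit_column M x \<longleftrightarrow> (\<forall>k. M $ k $ x = (if k = x then 1 else 0))"

lemma mat_1_entry: "(mat 1 :: int^'n^'n) $ r $ s = (if r = s then 1 else 0)"
  by (simp add: mat_def)

lemma sum_delta_mult_left:
  "(\<Sum>k\<in>(UNIV::'n::finite set). (if x = k then c else 0) * (f k::int)) = c * f x"
proof -
  have "(\<Sum>k\<in>(UNIV::'n set). (if x = k then c else 0) * f k) = (\<Sum>k\<in>UNIV. if x = k then c * f k else 0)"
    by (rule sum.cong) auto
  then show ?thesis by simp
qed

lemma sum_delta_mult_right:
  "(\<Sum>k\<in>(UNIV::'n::finite set). (f k::int) * (if x = k then c else 0)) = f x * c"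
  by (simp add: if_distrib cong: if_cong)

lemma elementary_entry:
  "elementary i j c $ r $ s = (if r = s then 1 else 0) + (if r = i \<and> s = j then c else 0)"
  by (simp add: elementary_def)

lemma elementary_mult:
  fixes M :: "int^'n::finite^'n"
  shows "(elementary i j c ** M) $ r $ s = M $ r $ s + (if r = i then c * M $ j $ s else 0)"
proof -
  have "(elementary i j c ** M) $ r $ s
      = (\<Sum>k\<in>UNIV. (if r = k then M $ k $ s else 0) + (if r = i \<and> k = j then c * M $ k $ s else 0))"
    by (simp add: elementary_def matrix_matrix_mult_def distrib_right) (rule sum.cong, auto)
  also have "\<dots> = M $ r $ s + (if r = i then c * M $ j $ s else 0)"
    by (simp add: sum.distrib)
  finally show ?thesis .
qed

lemma elementary_pair_mult:
  fixes M :: "int^'n::finite^'n"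
  shows "(elementary i j c ** elementary k l d ** M) $ r $ s
      = (M $ r $ s + (if r = k then d * M $ l $ s else 0))
        + (if r = i then c * (M $ j $ s + (if j = k then d * M $ l $ s else 0)) else 0)"
  by (simp add: matrix_mul_assoc[symmetric] elementary_mult)

lemma mult_transpose_elementary:
  fixes B :: "int^'n::finite^'n"
  shows "(B ** transpose (elementary i j c)) $ r $ s = B $ r $ s + (if s = i then c * B $ r $ j else 0)"
proof -
  have "(B ** transpose (elementary i j c)) $ r $ s
      = (\<Sum>k\<in>UNIV. (if s = k then B $ r $ k else 0) + (if s = i \<and> k = j then c * B $ r $ k else 0))"
    by (simp add: elementary_def matrix_matrix_mult_def transpose_def distrib_left) (rule sum.cong, auto)
  also have "\<dots> = B $ r $ s + (if s = i then c * B $ r $ j else 0)"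
    by (simp add: sum.distrib)
  finally show ?thesis .
qed

lemma elementary_mult_neg: "i \<noteq> j \<Longrightarrow> elementary i j c ** elementary i j (-c) = mat 1"
  by (simp add: vec_eq_iff elementary_mult elementary_entry mat_1_entry)

lemma matrix_inv_unique:
  fixes A B :: "int^'n::finite^'n"
  assumes "A ** B = mat 1" "B ** A = mat 1"
  shows "matrix_inv A = B"
proof -
  have inv: "A ** matrix_inv A = mat 1 \<and> matrix_inv A ** A = mat 1"
    unfolding matrix_inv_def by (rule someI[of _ B]) (use assms in auto)
  have "matrix_inv A = matrix_inv A ** (A ** B)" using assms by simp
  also have "\<dots> = (matrix_inv A ** A) ** B" by (simp add: matrix_mul_assoc)
  also have "\<dots> = B" using inv by simp
  finally show ?thesis .
qed

lemma matrix_inv_elementary: "i \<noteq> j \<Longrightarrow> matrix_inv (elementary i j c) = elementary i j (-c)"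
  by (rule matrix_inv_unique) (simp_all add: elementary_mult_neg elementary_mult_neg[of i j "-c", simplified])

lemma Emat_eq_elementary: "fst a \<noteq> fst b \<Longrightarrow> Emat a b = elementary (fst a) (fst b) (lsgn a * lsgn b)"
  by (auto simp add: Emat_def elementary_def vec_eq_iff)

lemma Nmat_entry: "Nmat a $ r $ s = (if r = s then (if r = fst a then -1 else 1) else 0)"
  by (simp add: Nmat_def)

lemma Nmat_fst: "Nmat u = Nmat (fst u, True)"
  unfolding Nmat_def fst_conv by (rule refl)

lemma Nmat_mult:
  fixes M :: "int^'n::finite^'n"
  shows "(Nmat a ** M) $ r $ s = (if r = fst a then - M $ r $ s else M $ r $ s)"
proof -
  have "(Nmat a ** M) $ r $ s
      = (\<Sum>k\<in>UNIV. if r = k then (if r = fst a then - M $ r $ s else M $ r $ s) else 0)"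
    unfolding Nmat_def matrix_matrix_mult_def by (auto simp: sum_delta_mult_left)
  then show ?thesis by simp
qed

lemma mult_transpose_Nmat:
  fixes B :: "int^'n::finite^'n"
  shows "(B ** transpose (Nmat a)) $ r $ s = (if s = fst a then - B $ r $ s else B $ r $ s)"
proof -
  have "(B ** transpose (Nmat a)) $ r $ s
      = (\<Sum>k\<in>UNIV. if s = k then (if s = fst a then - B $ r $ s else B $ r $ s) else 0)"
    unfolding Nmat_def matrix_matrix_mult_def transpose_def by (auto simp: sum_delta_mult_right)
  then show ?thesis by simp
qed

lemma Nmat_mult_self: "Nmat a ** Nmat a = mat 1"
  by (simp add: vec_eq_iff Nmat_mult Nmat_entry mat_1_entry)

lemma matrix_inv_Nmat: "matrix_inv (Nmat a) = Nmat a"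
  by (rule matrix_inv_unique) (simp_all add: Nmat_mult_self)

lemma act2_mult: "act2 (A ** B) M = act2 A (act2 B M)"
  unfolding act2_def by (simp add: matrix_transpose_mul matrix_mul_assoc)

lemma act2_mat_1: "act2 (mat 1) M = M"
  unfolding act2_def by simp

lemma act2_matrix_inv:
  assumes "A ** matrix_inv A = mat 1" "matrix_inv A ** A = mat 1" "act2 A M = M"
  shows "act2 (matrix_inv A) M = M"
  by (metis act2_mult act2_mat_1 assms)

lemma act2_elementary:
  fixes M :: "int^'n::finite^'n"
  shows "act2 (elementary i j c) M $ r $ s = M $ r $ s + (if r = i then c * M $ j $ s else 0)
      + (if s = i then c * M $ r $ j else 0) + (if r = i \<and> s = i then c * c * M $ j $ j else 0)"
  unfolding act2_def by (simp add: mult_transpose_elementary elementary_mult algebra_simps)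

lemma act2_Nmat:
  fixes M :: "int^'n::finite^'n"
  shows "act2 (Nmat a) M $ r $ s
      = (if r = fst a then -1 else 1) * (if s = fst a then -1 else 1) * M $ r $ s"
  unfolding act2_def by (simp add: mult_transpose_Nmat Nmat_mult)

lemma unit_column_mult:
  fixes A M :: "int^'n::finite^'n"
  assumes "unit_column M x"
  shows "(A ** M) $ k $ x = A $ k $ x"
proof -
  have "(A ** M) $ k $ x = (\<Sum>l\<in>UNIV. A $ k $ l * (if x = l then 1 else 0))"
    using assms unfolding unit_column_def matrix_matrix_mult_def by (auto intro!: sum.cong)
  then show ?thesis by (simp add: sum_delta_mult_right)
qed

lemma unit_column_mult_closed:
  fixes A B :: "int^'n::finite^'n"
  shows "unit_column A x \<Longrightarrow> unit_column B x \<Longrightarrow> unit_column (A ** B) x"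
  by (simp add: unit_column_def unit_column_mult)

lemma unit_column_left_inverse:
  fixes N M :: "int^'n::finite^'n"
  assumes "N ** M = mat 1" "unit_column M x"
  shows "unit_column N x"
  using assms unit_column_mult[OF assms(2), of N] by (simp add: unit_column_def mat_1_entry)

lemma unit_column_elementary: "x \<noteq> j \<Longrightarrow> unit_column (elementary i j c) x"
  by (simp add: unit_column_def elementary_entry)

lemma unit_column_Nmat: "x \<noteq> fst b \<Longrightarrow> unit_column (Nmat b) x"
  by (simp add: unit_column_def Nmat_entry)

lemma left_invertible_column_nonzero:
  fixes N M :: "int^'n::finite^'n"
  assumes "N ** M = mat 1"
  shows "\<exists>w. M $ w $ v \<noteq> 0"
proof (rule ccontr)
  assume "\<not> (\<exists>w. M $ w $ v \<noteq> 0)"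
  then have "(N ** M) $ v $ v = 0" unfolding matrix_matrix_mult_def by simp
  then show False using assms by (simp add: mat_1_entry)
qed

lemma left_invertible_monomial_column:
  fixes N M :: "int^'n::finite^'n"
  assumes "N ** M = mat 1" "\<forall>k. k \<noteq> v \<longrightarrow> M $ k $ v = 0"
  shows "M $ v $ v = 1 \<or> M $ v $ v = -1"
proof -
  have "(N ** M) $ v $ v = (\<Sum>l\<in>UNIV. N $ v $ l * (if v = l then M $ v $ v else 0))"
    unfolding matrix_matrix_mult_def using assms(2) by (auto intro!: sum.cong)
  also have "\<dots> = N $ v $ v * M $ v $ v" by (simp add: sum_delta_mult_right)
  finally have "(N ** M) $ v $ v = N $ v $ v * M $ v $ v" .
  then show ?thesis using assms(1) by (auto simp: mat_1_entry zmult_eq_1_iff)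
qed

lemma mgen_mult: "A \<in> mgen S \<Longrightarrow> B \<in> mgen S \<Longrightarrow> A ** B \<in> mgen S"
proof (induction A rule: mgen.induct)
  case (mul s g) then show ?case by (metis matrix_mul_assoc mgen.mul)
next
  case (mulinv s g) then show ?case by (metis matrix_mul_assoc mgen.mulinv)
qed simp

lemma mgen_generator: "s \<in> S \<Longrightarrow> s \<in> mgen S"
  using mgen.mul[OF _ mgen.one] by simp

lemma mgen_generator_inverse: "s \<in> S \<Longrightarrow> matrix_inv s \<in> mgen S"
  using mgen.mulinv[OF _ mgen.one] by simp

lemma mgen_has_inverse:
  fixes S :: "(int^'n::finite^'n) set"
  assumes inv: "\<And>s. s \<in> S \<Longrightarrow> s ** matrix_inv s = mat 1 \<and> matrix_inv s ** s = mat 1"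
  shows "A \<in> mgen S \<Longrightarrow> \<exists>B\<in>mgen S. A ** B = mat 1 \<and> B ** A = mat 1"
proof (induction A rule: mgen.induct)
  case one then show ?case using mgen.one by fastforce
next
  case (mul s g)
  then obtain B where B: "B \<in> mgen S" "g ** B = mat 1" "B ** g = mat 1" by auto
  have "(s ** g) ** (B ** matrix_inv s) = s ** (g ** B) ** matrix_inv s"
    "(B ** matrix_inv s) ** (s ** g) = B ** (matrix_inv s ** s) ** g"
    by (simp_all add: matrix_mul_assoc)
  then show ?case using B inv[OF mul(1)] mgen_mult[OF B(1) mgen_generator_inverse[OF mul(1)]]
    by (metis matrix_mul_lid matrix_mul_rid)
next
  case (mulinv s g)
  then obtain B where B: "B \<in> mgen S" "g ** B = mat 1" "B ** g = mat 1" by auto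
  have "(matrix_inv s ** g) ** (B ** s) = matrix_inv s ** (g ** B) ** s"
    "(B ** s) ** (matrix_inv s ** g) = B ** (s ** matrix_inv s) ** g"
    by (simp_all add: matrix_mul_assoc)
  then show ?case using B inv[OF mulinv(1)] mgen_mult[OF B(1) mgen_generator[OF mulinv(1)]]
    by (metis matrix_mul_lid matrix_mul_rid)
qed

lemma mgen_matrix_inv:
  fixes S :: "(int^'n::finite^'n) set"
  assumes "\<And>s. s \<in> S \<Longrightarrow> s ** matrix_inv s = mat 1 \<and> matrix_inv s ** s = mat 1"
    and "A \<in> mgen S"
  shows "A ** matrix_inv A = mat 1" "matrix_inv A ** A = mat 1" "matrix_inv A \<in> mgen S"
proof -
  obtain B where B: "B \<in> mgen S" "A ** B = mat 1" "B ** A = mat 1"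
    using mgen_has_inverse[OF assms] by blast
  then have "matrix_inv A = B" by (simp add: matrix_inv_unique)
  then show "A ** matrix_inv A = mat 1" "matrix_inv A ** A = mat 1" "matrix_inv A \<in> mgen S"
    using B by simp_all
qed

lemma mgen_cancel_left:
  fixes S :: "(int^'n::finite^'n) set"
  assumes "\<And>s. s \<in> S \<Longrightarrow> s ** matrix_inv s = mat 1 \<and> matrix_inv s ** s = mat 1"
    and "W \<in> mgen S" "W ** M \<in> mgen S"
  shows "M \<in> mgen S"
proof -
  have "M = matrix_inv W ** (W ** M)"
    using mgen_matrix_inv[OF assms(1,2)] by (simp add: matrix_mul_assoc)
  then show ?thesis using mgen_mult[OF mgen_matrix_inv(3)[OF assms(1,2)] assms(3)] by simp
qed

definition column_weight :: "'n set \<Rightarrow> int^'n^'n \<Rightarrow> 'n \<Rightarrow> nat" where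
  "column_weight A M x = (\<Sum>i\<in>A. nat \<bar>M $ i $ x\<bar>)"

lemma column_weight_decrease:
  assumes "finite A" "i \<in> A" "\<bar>N $ i $ x\<bar> < \<bar>M $ i $ x\<bar>"
    and "\<And>j. j \<in> A \<Longrightarrow> j \<noteq> i \<Longrightarrow> N $ j $ x = M $ j $ x"
  shows "column_weight A N x < column_weight A M x"
proof -
  have "(\<Sum>j\<in>A - {i}. nat \<bar>N $ j $ x\<bar>) = (\<Sum>j\<in>A - {i}. nat \<bar>M $ j $ x\<bar>)"
    using assms by (intro sum.cong) auto
  then show ?thesis using assms by (simp add: column_weight_def sum.remove)
qed

lemma int_abs_decrease_by_unit:
  fixes x y :: int
  assumes "y \<noteq> 0" "\<bar>y\<bar> \<le> \<bar>x\<bar>"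
  obtains c where "c = 1 \<or> c = -1" "\<bar>x + c * y\<bar> < \<bar>x\<bar>"
proof (cases "(0 < x) = (0 < y)")
  case True then show ?thesis using assms by (intro that[of "-1"]) auto
next
  case False then show ?thesis using assms by (intro that[of 1]) auto
qed

locale Q_setting =
  fixes adj :: "'v::finite \<Rightarrow> 'v \<Rightarrow> bool"
    and st :: "'v letter \<Rightarrow> 'v letter"
    and g :: nat
    and a :: "nat \<Rightarrow> 'v letter"
  assumes graph: "is_graph adj"
    and card_vertices: "CARD('v) = 2 * g"
    and st_st: "\<And>u. st (st u) = linv u"
    and a_cover: "fst ` (a ` {..<g} \<union> st ` a ` {..<g}) = UNIV"
begin

abbreviation Q where "Q \<equiv> Qform adj st g a"
abbreviation vd where "vd \<equiv> vdom adj"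

definition partner :: "'v \<Rightarrow> 'v" where "partner x = fst (st (x, True))"
definition tau :: "'v \<Rightarrow> int" where "tau x = lsgn (x, True) * lsgn (st (x, True))"
definition Qsupp :: "'v set" where "Qsupp = {x. adj x (partner x)}"

lemma adj_sym: "adj x y \<Longrightarrow> adj y x"
  using graph by (auto simp: is_graph_def)

lemma linv_simps [simp]: "fst (linv u) = fst u" "linv (linv u) = u" "linv (x, b) = (x, \<not> b)"
  by (auto simp: linv_def)

lemma lsgn_simps [simp]: "lsgn (x, True) = 1" "lsgn (x, False) = -1" "lsgn (linv u) = - lsgn u"
  by (auto simp: lsgn_def linv_def)

lemma st_linv: "st (linv u) = linv (st u)"
  using st_st[of "st u"] arg_cong[OF st_st[of u], of st] by simp

lemma st_False: "st (x, False) = linv (st (x, True))"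
  using st_linv[of "(x, True)"] by simp

lemma fst_st: "fst (st u) = partner (fst u)"
  by (cases u; cases "snd u") (auto simp: partner_def st_False)

lemma lsgn_st: "lsgn u * lsgn (st u) = tau (fst u)"
  by (cases u; cases "snd u") (auto simp: tau_def st_False)

lemma lsgn_st': "lsgn (st u) = tau (fst u) * lsgn u"
proof -
  have "tau (fst u) * lsgn u = lsgn u * lsgn u * lsgn (st u)" by (simp add: lsgn_st[symmetric])
  also have "lsgn u * lsgn u = 1" by (simp add: lsgn_def)
  finally show ?thesis by simp
qed

lemma partner_partner [simp]: "partner (partner x) = x"
  using fst_st[of "st (x, True)"] by (simp add: st_st partner_def)

lemma partner_eq_iff: "partner x = partner y \<longleftrightarrow> x = y"
  by (metis partner_partner)

text \<open>Otherwise \<open>st (x, True)\<close> would be \<open>(x, b)\<close>, and \<open>st\<close> applied once more could not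
  give \<open>linv (x, True) = (x, False)\<close>.\<close>
lemma partner_neq: "partner x \<noteq> x"
proof
  assume h: "partner x = x"
  then obtain b where b: "st (x, True) = (x, b)" unfolding partner_def by (metis prod.collapse)
  show False
  proof (cases b)
    case True
    then show False using b st_st[of "(x, True)"] by simp
  next
    case False
    then have "st (x, True) = linv (x, True)" using b by simp
    then have "st (st (x, True)) = linv (st (x, True))" by (metis st_linv)
    then show False using st_st[of "(x, True)"] b by simp
  qed
qed

lemma tau_partner: "tau (partner x) = - tau x"
proof -
  have "tau (partner x) = lsgn (st (x, True)) * lsgn (st (st (x, True)))"
    using lsgn_st[of "st (x, True)"] by (simp add: fst_st)
  also have "\<dots> = - tau x" by (simp add: st_st tau_def)
  finally show ?thesis .
qed

lemma tau_cases: "tau x = 1 \<or> tau x = -1"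
  by (auto simp: tau_def lsgn_def)

lemma tau_mult_self [simp]: "tau x * tau x = 1"
  using tau_cases[of x] by auto

lemma tau_nonzero [simp]: "tau x \<noteq> 0"
  using tau_cases[of x] by auto

lemma partner_Qsupp_iff: "partner x \<in> Qsupp \<longleftrightarrow> x \<in> Qsupp"
  by (auto simp: Qsupp_def adj_sym)

text \<open>The \<open>2g\<close> vertices of \<open>a\<^sub>i\<close> and \<open>a\<^sub>i*\<close> cover \<open>X\<close>, which has only \<open>2g\<close> elements.\<close>
lemma a_vertices_distinct:
  assumes "i < g" "j < g" "i \<noteq> j"
  shows "fst (a i) \<noteq> fst (a j)" "fst (a i) \<noteq> partner (fst (a j))"
proof -
  define F where "F = (\<lambda>(i, b). if b then fst (a i) else partner (fst (a i)))"
  have "F ` ({..<g} \<times> UNIV) = UNIV"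
  proof -
    have "x \<in> F ` ({..<g} \<times> UNIV)" for x
    proof -
      have "x \<in> fst ` (a ` {..<g} \<union> st ` a ` {..<g})" using a_cover by simp
      then obtain i where "i < g" "x = fst (a i) \<or> x = partner (fst (a i))"
        by (auto simp: fst_st)
      then show ?thesis
        unfolding F_def by (auto intro: image_eqI[of _ _ "(i, True)"] image_eqI[of _ _ "(i, False)"])
    qed
    then show ?thesis by auto
  qed
  then have "inj_on F ({..<g} \<times> UNIV)"
    by (intro eq_card_imp_inj_on) (simp_all add: card_vertices card_cartesian_product)
  then have F_inj: "F x = F y \<Longrightarrow> x = y" if "x \<in> {..<g} \<times> UNIV" "y \<in> {..<g} \<times> UNIV" for x y
    using that unfolding inj_on_def by blast
  then show "fst (a i) \<noteq> fst (a j)" "fst (a i) \<noteq> partner (fst (a j))"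
    using assms F_inj[of "(i, True)" "(j, True)"] F_inj[of "(i, True)" "(j, False)"]
    unfolding F_def by auto
qed

lemma wedge_a_entry:
  "wedge (limg (a i)) (limg (st (a i))) $ r $ s
     = (if r = fst (a i) \<and> s = partner (fst (a i)) then tau (fst (a i)) else 0)
       - (if r = partner (fst (a i)) \<and> s = fst (a i) then tau (fst (a i)) else 0)"
  using lsgn_st[of "a i"] partner_neq[of "fst (a i)"]
  unfolding wedge_def limg_def by (auto simp: fst_st mult.commute)

text \<open>Each vertex \<open>r\<close> occurs in exactly one summand of \<open>Q\<close>, namely the one of the pair
  \<open>{a\<^sub>j, a\<^sub>j*}\<close> containing it.\<close>
lemma Q_entry: "Q $ r $ s = (if r \<in> Qsupp \<and> s = partner r then tau r else 0)"
proof -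
  define I where "I = {i. i < g \<and> adj (fst (st (a i))) (fst (a i))}"
  have "r \<in> fst ` (a ` {..<g} \<union> st ` a ` {..<g})" using a_cover by simp
  then obtain j where j: "j < g" "r = fst (a j) \<or> r = partner (fst (a j))"
    by (auto simp: fst_st)
  have "Q $ r $ s = (\<Sum>i\<in>I. wedge (limg (a i)) (limg (st (a i))) $ r $ s)"
    unfolding Qform_def I_def by simp
  also have "\<dots> = (\<Sum>i\<in>I. if i = j then wedge (limg (a j)) (limg (st (a j))) $ r $ s else 0)"
  proof (rule sum.cong)
    fix i assume "i \<in> I"
    then show "wedge (limg (a i)) (limg (st (a i))) $ r $ s
        = (if i = j then wedge (limg (a j)) (limg (st (a j))) $ r $ s else 0)"
      using a_vertices_distinct[of i j] a_vertices_distinct[of j i] j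
      by (cases "i = j") (auto simp: wedge_a_entry I_def partner_eq_iff)
  qed simp
  also have "\<dots> = (if j \<in> I then wedge (limg (a j)) (limg (st (a j))) $ r $ s else 0)"
    by (simp add: I_def)
  also have "\<dots> = (if r \<in> Qsupp \<and> s = partner r then tau r else 0)"
  proof -
    have "j \<in> I \<longleftrightarrow> r \<in> Qsupp"
      using j by (auto simp: I_def Qsupp_def fst_st adj_sym)
    then show ?thesis using j by (auto simp: wedge_a_entry tau_partner partner_neq)
  qed
  finally show ?thesis .
qed

lemma suppW_Q: "suppW Q = Qsupp"
  unfolding suppW_def by (auto simp: Q_entry partner_Qsupp_iff)

lemma vd_refl: "vd x x"
  by (simp add: vdom_def)

lemma vd_trans: "vd x y \<Longrightarrow> vd y z \<Longrightarrow> vd x z"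
  unfolding vdom_def by (metis adj_sym)

definition Qdom :: "'v \<Rightarrow> 'v \<Rightarrow> bool" where
  "Qdom x y \<longleftrightarrow> vd x y \<and> vd (partner y) (partner x)"

lemma Qdom_refl: "Qdom x x"
  by (simp add: Qdom_def vd_refl)

lemma Qdom_trans: "Qdom x y \<Longrightarrow> Qdom y z \<Longrightarrow> Qdom x z"
  unfolding Qdom_def using vd_trans by blast

abbreviation TQ where "TQ \<equiv> std_transv adj st Q \<union> Q_inversions st Q"
abbreviation GQ where "GQ \<equiv> Ggens adj Q"

text \<open>The matrix of \<open>E\<^sub>i\<^sub>,\<^sub>j E\<^sub>j\<^sub>*\<^sub>,\<^sub>i\<^sub>*\<^sup>-\<^sup>1\<close>, with \<open>c = \<plusminus>1\<close> the sign of the coefficient of \<open>E\<^sub>i\<^sub>,\<^sub>j\<close>.\<close>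
definition Qtransv :: "'v \<Rightarrow> 'v \<Rightarrow> int \<Rightarrow> int^'v^'v" where
  "Qtransv i j c = elementary i j c ** elementary (partner j) (partner i) (-(tau i * tau j * c))"

definition Qinversion :: "'v \<Rightarrow> int^'v^'v" where
  "Qinversion x = Nmat (x, True) ** Nmat (partner x, True)"

lemma Qtransv_mult:
  fixes M :: "int^'v^'v"
  shows "(Qtransv i j c ** M) $ r $ s = M $ r $ s
     + (if r = partner j then -(tau i * tau j * c) * M $ partner i $ s else 0)
     + (if r = i then c * M $ j $ s else 0)"
  using partner_neq[of j] unfolding Qtransv_def elementary_pair_mult by auto

lemma unit_column_Qtransv: "x \<noteq> j \<Longrightarrow> x \<noteq> partner i \<Longrightarrow> unit_column (Qtransv i j c) x"
  unfolding Qtransv_def by (intro unit_column_mult_closed unit_column_elementary)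

lemma Qinversion_mult:
  fixes M :: "int^'v^'v"
  shows "(Qinversion x ** M) $ r $ s = (if r = x \<or> r = partner x then - M $ r $ s else M $ r $ s)"
  using partner_neq[of x] unfolding Qinversion_def by (auto simp: matrix_mul_assoc[symmetric] Nmat_mult)

lemma unit_column_Qinversion: "y \<noteq> x \<Longrightarrow> y \<noteq> partner x \<Longrightarrow> unit_column (Qinversion x) y"
  unfolding Qinversion_def by (intro unit_column_mult_closed unit_column_Nmat) auto

lemma act2_elementary_partner: "act2 (elementary x (partner x) c) Q = Q"
  by (simp add: vec_eq_iff act2_elementary Q_entry partner_Qsupp_iff tau_partner partner_neq partner_eq_iff)

lemma act2_second_factor_Qtransv:
  assumes "i \<noteq> j" "partner i \<noteq> j" "i \<in> Qsupp"
  shows "act2 (elementary (partner j) (partner i) (-(tau i * tau j * c))) Q $ r $ s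
       = Q $ r $ s + (if r = partner j \<and> s = i then tau j * c else 0)
         - (if s = partner j \<and> r = i then tau j * c else 0)"
proof -
  have q1: "Q $ partner i $ s' = (if s' = i then - tau i else 0)" for s'
    using assms by (simp add: Q_entry partner_Qsupp_iff tau_partner)
  have q2: "Q $ r' $ partner i = (if r' = i then tau i else 0)" for r'
    using assms by (auto simp add: Q_entry partner_eq_iff)
  have q3: "Q $ partner i $ partner i = 0" by (simp add: Q_entry partner_neq)
  have e: "- (tau i * tau j * c) * - tau i = tau j * c" "- (tau i * tau j * c) * tau i = - (tau j * c)"
    by (simp_all add: algebra_simps)
  show ?thesis using assms unfolding act2_elementary q1 q2 q3
    by (cases "r = partner j"; cases "s = i"; cases "s = partner j"; cases "r = i") (simp_all add: e partner_neq)
qed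

text \<open>The second factor changes \<open>Q\<close> exactly by \<open>\<plusminus>c (x\<^sub>j\<^sub>* \<and> x\<^sub>i)\<close>, which the first factor cancels.\<close>
lemma act2_Qtransv:
  assumes "i \<noteq> j" "partner i \<noteq> j" "i \<in> Qsupp" "j \<in> Qsupp"
  shows "act2 (Qtransv i j c) Q = Q"
proof -
  let ?F = "act2 (elementary (partner j) (partner i) (-(tau i * tau j * c))) Q"
  note F = act2_second_factor_Qtransv[OF assms(1-3)]
  have q1: "?F $ j $ s = (if s = partner j then tau j else 0)" for s
    using assms partner_neq[of j] by (simp add: F Q_entry)
  have q2: "?F $ r $ j = (if r = partner j then - tau j else 0)" for r
    using assms partner_neq[of j] by (auto simp add: F Q_entry tau_partner partner_eq_iff partner_Qsupp_iff)
  have q3: "?F $ j $ j = 0"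
    using assms partner_neq[of j] by (simp add: F Q_entry)
  have "act2 (Qtransv i j c) Q $ r $ s = Q $ r $ s" for r s
    using assms partner_neq[of j] unfolding Qtransv_def act2_mult act2_elementary[of i j c] q1 q2 q3 F[of c r s]
    by (cases "r = i"; cases "s = i"; cases "r = partner j"; cases "s = partner j") (auto simp: algebra_simps)
  then show ?thesis by (simp add: vec_eq_iff)
qed

lemma act2_Qinversion: "act2 (Qinversion x) Q = Q"
  by (auto simp: Qinversion_def vec_eq_iff act2_mult act2_Nmat Q_entry partner_neq partner_eq_iff)

lemma TQ_cases:
  assumes "t \<in> TQ"
  obtains (partner) x where "x \<in> Qsupp" "vd x (partner x)" "t = elementary x (partner x) (tau x)"
    | (pair) i j c where "i \<in> Qsupp" "j \<in> Qsupp" "i \<noteq> j" "partner i \<noteq> j" "vd i j"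
        "vd (partner j) (partner i)" "c = 1 \<or> c = -1" "t = Qtransv i j c"
    | (inversion) x where "x \<in> Qsupp" "t = Qinversion x"
proof -
  consider (partner) b where "t = Emat b (st b)" "fst b \<in> Qsupp" "ldom adj b (st b)"
    | (pair) b d where "t = Emat b d ** matrix_inv (Emat (st d) (st b))" "fst b \<in> Qsupp"
        "fst d \<in> Qsupp" "fst b \<noteq> fst d" "fst (st b) \<noteq> fst d" "ldom adj b d" "ldom adj (st d) (st b)"
    | (inversion) b where "t = Nmat b ** Nmat (st b)" "fst b \<in> Qsupp"
    using assms unfolding std_transv_def Q_inversions_def suppW_Q by blast
  then show ?thesis
  proof cases
    case partner
    have "t = elementary (fst b) (partner (fst b)) (tau (fst b))"
      using partner partner_neq[of "fst b"] by (simp add: Emat_eq_elementary fst_st lsgn_st)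
    then show ?thesis using partner that(1)[of "fst b"] by (auto simp: ldom_def fst_st)
  next
    case pair
    define c where "c = lsgn b * lsgn d"
    have c: "c = 1 \<or> c = -1" by (auto simp: c_def lsgn_def)
    have "t = Qtransv (fst b) (fst d) c"
      using pair by (simp add: Qtransv_def Emat_eq_elementary fst_st lsgn_st' partner_eq_iff
          matrix_inv_elementary c_def algebra_simps)
    then show ?thesis using pair c that(2)[of "fst b" "fst d" c] by (auto simp: ldom_def fst_st)
  next
    case inversion
    then show ?thesis using that(3)[of "fst b"] unfolding Qinversion_def by (metis Nmat_fst fst_st)
  qed
qed

lemma elementary_partner_in_TQ:
  assumes "x \<in> Qsupp" "vd x (partner x)"
  shows "elementary x (partner x) (tau x) \<in> TQ"
proof -
  have "Emat (x, True) (st (x, True)) = elementary x (partner x) (tau x)"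
    using partner_neq[of x] by (simp add: Emat_eq_elementary fst_st tau_def)
  moreover have "Emat (x, True) (st (x, True)) \<in> std_transv adj st Q"
    unfolding std_transv_def suppW_Q using assms by (auto simp: ldom_def fst_st)
  ultimately show ?thesis by auto
qed

lemma Qtransv_in_TQ:
  assumes "i \<in> Qsupp" "j \<in> Qsupp" "i \<noteq> j" "partner i \<noteq> j" "Qdom i j" "c = 1 \<or> c = -1"
  shows "Qtransv i j c \<in> TQ"
proof -
  define b where "b = (i, c = 1)"
  define d where "d = (j, True)"
  have "lsgn b * lsgn d = c" using assms(6) by (auto simp: b_def d_def)
  then have "Emat b d ** matrix_inv (Emat (st d) (st b)) = Qtransv i j c"
    using assms by (simp add: Qtransv_def b_def d_def Emat_eq_elementary fst_st lsgn_st' partner_eq_iff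
        matrix_inv_elementary algebra_simps)
  moreover have "Emat b d ** matrix_inv (Emat (st d) (st b)) \<in> std_transv adj st Q"
    unfolding std_transv_def suppW_Q
    by (rule UnI2, rule CollectI, rule exI[of _ b], rule exI[of _ d])
      (use assms in \<open>auto simp: Qdom_def ldom_def fst_st b_def d_def\<close>)
  ultimately show ?thesis by auto
qed

lemma Qinversion_in_TQ: "x \<in> Qsupp \<Longrightarrow> Qinversion x \<in> TQ"
proof -
  assume "x \<in> Qsupp"
  then have "Nmat (x, True) ** Nmat (st (x, True)) \<in> Q_inversions st Q"
    unfolding Q_inversions_def suppW_Q by auto
  then show ?thesis unfolding Qinversion_def by (metis Nmat_fst fst_st fst_conv UnI2)
qed

lemma elementary_partner_in_mgen_TQ:
  assumes "x \<in> Qsupp" "vd x (partner x)" "c = 1 \<or> c = -1"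
  shows "elementary x (partner x) c \<in> mgen TQ"
proof (cases "c = tau x")
  case True
  then show ?thesis using mgen_generator[OF elementary_partner_in_TQ[OF assms(1,2)]] by simp
next
  case False
  then have "c = - tau x" using assms(3) tau_cases[of x] by auto
  then show ?thesis
    using mgen_generator_inverse[OF elementary_partner_in_TQ[OF assms(1,2)]]
      matrix_inv_elementary[of x "partner x" "tau x"] partner_neq[of x]
    by auto
qed

lemma GQ_cases:
  assumes "s \<in> GQ"
  obtains (transvection) x y where "y \<in> Qsupp" "vd x y" "x \<noteq> y" "s = elementary x y 1"
    | (inversion) y where "y \<in> Qsupp" "s = Nmat (y, True)"
  using assms unfolding Ggens_def suppW_Q by (auto simp: Emat_eq_elementary)

lemma elementary_in_GQ:
  assumes "y \<in> Qsupp" "vd x y" "x \<noteq> y"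
  shows "elementary x y 1 \<in> GQ"
proof -
  have "Emat (x, True) (y, True) \<in> GQ" unfolding Ggens_def suppW_Q using assms by blast
  then show ?thesis using assms by (simp add: Emat_eq_elementary)
qed

lemma Nmat_in_GQ: "y \<in> Qsupp \<Longrightarrow> Nmat (y, True) \<in> GQ"
  unfolding Ggens_def suppW_Q by blast

lemma GQ_invertible: "s \<in> GQ \<Longrightarrow> s ** matrix_inv s = mat 1 \<and> matrix_inv s ** s = mat 1"
  by (erule GQ_cases) (simp_all add: matrix_inv_elementary matrix_inv_Nmat Nmat_mult_self
      elementary_mult_neg elementary_mult_neg[of _ _ "-1", simplified])

lemmas mgen_GQ_inverse = mgen_matrix_inv[of GQ, OF GQ_invertible]

lemma elementary_in_mgen_GQ:
  assumes "y \<in> Qsupp" "vd x y" "x \<noteq> y" "c = 1 \<or> c = -1"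
  shows "elementary x y c \<in> mgen GQ"
  using assms(4)
proof
  assume "c = -1"
  then show ?thesis
    using mgen_generator_inverse[OF elementary_in_GQ[OF assms(1-3)]] matrix_inv_elementary[OF assms(3), of 1]
    by simp
qed (use mgen_generator[OF elementary_in_GQ[OF assms(1-3)]] in simp)

lemma TQ_in_mgen_GQ:
  assumes "t \<in> TQ"
  shows "t \<in> mgen GQ"
  using assms
proof (cases rule: TQ_cases)
  case (partner x)
  then show ?thesis
    using elementary_in_mgen_GQ[of "partner x" x "tau x"] partner_neq[of x] tau_cases[of x]
    by (simp add: partner_Qsupp_iff)
next
  case (pair i j c)
  have c: "-(tau i * tau j * c) = 1 \<or> -(tau i * tau j * c) = -1"
    using pair(7) tau_cases[of i] tau_cases[of j] by auto
  have "elementary i j c \<in> mgen GQ" using pair elementary_in_mgen_GQ by blast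
  moreover have "elementary (partner j) (partner i) (-(tau i * tau j * c)) \<in> mgen GQ"
    using pair c elementary_in_mgen_GQ[of "partner i" "partner j"] by (simp add: partner_Qsupp_iff partner_eq_iff)
  ultimately show ?thesis using pair(8) mgen_mult unfolding Qtransv_def by blast
next
  case (inversion x)
  then show ?thesis
    using mgen_mult[OF mgen_generator[OF Nmat_in_GQ] mgen_generator[OF Nmat_in_GQ]]
    by (simp add: Qinversion_def partner_Qsupp_iff)
qed

lemma TQ_fixes_Q: "t \<in> TQ \<Longrightarrow> act2 t Q = Q"
  by (erule TQ_cases) (simp_all add: act2_elementary_partner act2_Qtransv act2_Qinversion)

lemma TQ_invertible: "t \<in> TQ \<Longrightarrow> t ** matrix_inv t = mat 1 \<and> matrix_inv t ** t = mat 1"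
  using TQ_in_mgen_GQ mgen_GQ_inverse by blast

definition in_stab :: "int^'v^'v \<Rightarrow> bool" where
  "in_stab M \<longleftrightarrow> M \<in> mgen GQ \<and> act2 M Q = Q"

lemma mgen_TQ_in_stab: "A \<in> mgen TQ \<Longrightarrow> in_stab A"
proof (induction A rule: mgen.induct)
  case one then show ?case by (simp add: in_stab_def mgen.one act2_mat_1)
next
  case (mul s g)
  then show ?case
    using TQ_fixes_Q mgen_mult[OF TQ_in_mgen_GQ[OF mul(1)]] by (simp add: in_stab_def act2_mult)
next
  case (mulinv s g)
  have "matrix_inv s \<in> mgen GQ" using mgen_GQ_inverse TQ_in_mgen_GQ mulinv by blast
  moreover have "act2 (matrix_inv s) Q = Q"
    using act2_matrix_inv TQ_invertible TQ_fixes_Q mulinv by blast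
  ultimately show ?case using mulinv mgen_mult[of "matrix_inv s" GQ g] by (simp add: in_stab_def act2_mult)
qed

definition dominated_shape :: "int^'v^'v \<Rightarrow> bool" where
  "dominated_shape M \<longleftrightarrow> (\<forall>r s. r \<noteq> s \<and> M $ r $ s \<noteq> 0 \<longrightarrow> s \<in> Qsupp \<and> vd r s)
     \<and> (\<forall>s. s \<notin> Qsupp \<longrightarrow> M $ s $ s = 1)"

lemma dominated_shape_elementary_mult:
  assumes M: "dominated_shape M" and xy: "y \<in> Qsupp" "vd x y" "x \<noteq> y"
  shows "dominated_shape (elementary x y c ** M)"
  unfolding dominated_shape_def
proof (rule conjI; intro allI impI)
  fix r s assume rs: "r \<noteq> s \<and> (elementary x y c ** M) $ r $ s \<noteq> 0"
  then have "M $ r $ s \<noteq> 0 \<or> (r = x \<and> M $ y $ s \<noteq> 0)"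
    by (auto simp: elementary_mult split: if_splits)
  then show "s \<in> Qsupp \<and> vd r s"
  proof
    assume "M $ r $ s \<noteq> 0"
    then show ?thesis using M rs by (auto simp: dominated_shape_def)
  next
    assume "r = x \<and> M $ y $ s \<noteq> 0"
    then show ?thesis using M xy rs vd_trans unfolding dominated_shape_def by (cases "y = s") blast+
  qed
next
  fix s assume s: "s \<notin> Qsupp"
  moreover have "y \<noteq> s" using s xy by auto
  ultimately have "M $ y $ s = 0" using M by (auto simp: dominated_shape_def)
  then show "(elementary x y c ** M) $ s $ s = 1"
    using M s by (auto simp: dominated_shape_def elementary_mult)
qed

lemma mgen_GQ_dominated_shape: "A \<in> mgen GQ \<Longrightarrow> dominated_shape A"
proof (induction A rule: mgen.induct)
  case one then show ?case by (simp add: dominated_shape_def mat_1_entry)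
next
  case (mul s g)
  from mul(1) show ?case
  proof (cases rule: GQ_cases)
    case (transvection x y)
    then show ?thesis using dominated_shape_elementary_mult[OF mul(3)] by simp
  next
    case (inversion y)
    then show ?thesis using mul(3) by (auto simp: dominated_shape_def Nmat_mult)
  qed
next
  case (mulinv s g)
  from mulinv(1) show ?case
  proof (cases rule: GQ_cases)
    case (transvection x y)
    then show ?thesis using dominated_shape_elementary_mult[OF mulinv(3)] by (simp add: matrix_inv_elementary)
  next
    case (inversion y)
    then show ?thesis using mulinv(3) by (auto simp: dominated_shape_def Nmat_mult matrix_inv_Nmat)
  qed
qed

lemma mgen_GQ_unit_column: "A \<in> mgen GQ \<Longrightarrow> s \<notin> Qsupp \<Longrightarrow> unit_column A s"
  using mgen_GQ_dominated_shape unfolding dominated_shape_def unit_column_def by auto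

lemma stab_entry_relation:
  assumes M: "in_stab M" and s: "s \<in> Qsupp"
  shows "M $ r $ s * tau s
    = (if r \<in> Qsupp then tau r * matrix_inv M $ partner s $ partner r else 0)"
proof -
  have inv: "matrix_inv M ** M = mat 1" using M mgen_GQ_inverse by (auto simp: in_stab_def)
  have "(M ** Q ** transpose M) ** transpose (matrix_inv M)
      = (M ** Q) ** (transpose M ** transpose (matrix_inv M))"
    by (simp add: matrix_mul_assoc)
  also have "transpose M ** transpose (matrix_inv M) = mat 1"
    by (simp add: matrix_transpose_mul[symmetric] inv)
  finally have "M ** Q = (M ** Q ** transpose M) ** transpose (matrix_inv M)" by simp
  then have MQ: "M ** Q = Q ** transpose (matrix_inv M)"
    using M by (simp add: in_stab_def act2_def)
  have "(M ** Q) $ r $ partner s = (\<Sum>k\<in>UNIV. M $ r $ k * (if s = k then tau s else 0))"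
    unfolding matrix_matrix_mult_def using s by (auto simp: Q_entry partner_eq_iff intro!: sum.cong)
  then have 1: "(M ** Q) $ r $ partner s = M $ r $ s * tau s" by (simp add: sum_delta_mult_right)
  have "(Q ** transpose (matrix_inv M)) $ r $ partner s
      = (\<Sum>k\<in>UNIV. (if partner r = k then (if r \<in> Qsupp then tau r else 0) else 0)
          * matrix_inv M $ partner s $ k)"
    unfolding matrix_matrix_mult_def transpose_def by (auto simp: Q_entry intro!: sum.cong)
  then have 2: "(Q ** transpose (matrix_inv M)) $ r $ partner s
      = (if r \<in> Qsupp then tau r * matrix_inv M $ partner s $ partner r else 0)"
    by (simp add: sum_delta_mult_left)
  show ?thesis using 1 2 MQ by simp
qed

lemma stab_offdiag_Qdom:
  assumes M: "in_stab M" and rs: "r \<noteq> s" "M $ r $ s \<noteq> 0"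
  shows "r \<in> Qsupp" "s \<in> Qsupp" "Qdom r s"
proof -
  have GQ: "M \<in> mgen GQ" "matrix_inv M \<in> mgen GQ" using M mgen_GQ_inverse by (auto simp: in_stab_def)
  have s: "s \<in> Qsupp" "vd r s"
    using mgen_GQ_dominated_shape[OF GQ(1)] rs by (auto simp: dominated_shape_def)
  have r: "r \<in> Qsupp" "matrix_inv M $ partner s $ partner r \<noteq> 0"
    using stab_entry_relation[OF M s(1), of r] rs by (auto split: if_splits)
  have "vd (partner s) (partner r)"
    using mgen_GQ_dominated_shape[OF GQ(2)] r(2) rs(1) by (auto simp: dominated_shape_def partner_eq_iff)
  then show "r \<in> Qsupp" "s \<in> Qsupp" "Qdom r s" using r s by (simp_all add: Qdom_def)
qed

definition reduced_off :: "'v set \<Rightarrow> int^'v^'v \<Rightarrow> bool" where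
  "reduced_off R M \<longleftrightarrow> in_stab M \<and> (\<forall>x. x \<notin> R \<longrightarrow> unit_column M x)"

lemma stab_partner_diagonal:
  assumes M: "in_stab M" and v: "v \<in> Qsupp" "unit_column M v"
  shows "M $ partner v $ partner v = 1"
proof -
  have "matrix_inv M ** M = mat 1" using mgen_GQ_inverse M by (auto simp: in_stab_def)
  then have "unit_column (matrix_inv M) v" using unit_column_left_inverse v(2) by blast
  then show ?thesis
    using stab_entry_relation[OF M, of "partner v" "partner v"] v
    by (simp add: partner_Qsupp_iff unit_column_def)
qed

lemma reduced_off_step:
  assumes M: "reduced_off R M" and t: "t \<in> mgen TQ" "\<And>x. x \<notin> R \<Longrightarrow> unit_column t x"
    and tM: "reduced_off R (t ** M) \<Longrightarrow> t ** M \<in> mgen TQ"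
  shows "M \<in> mgen TQ"
proof -
  have "in_stab (t ** M)"
    using mgen_TQ_in_stab[OF t(1)] M mgen_mult by (auto simp: reduced_off_def in_stab_def act2_mult)
  then have "reduced_off R (t ** M)"
    using M t(2) by (auto simp: reduced_off_def intro!: unit_column_mult_closed)
  then show ?thesis using mgen_cancel_left[of TQ, OF TQ_invertible t(1) tM] by blast
qed

text \<open>For \<open>r \<notin> R\<close> the entry \<open>M[r,s]\<close> is \<open>\<plusminus>M\<^sup>-\<^sup>1[s*,r*]\<close>, which vanishes as column \<open>r*\<close> of \<open>M\<close>,
  and hence of \<open>M\<^sup>-\<^sup>1\<close>, is a unit column.\<close>
lemma reduced_off_column_zero_outside:
  assumes M: "reduced_off R M" and R: "R \<subseteq> Qsupp" "\<And>x. x \<in> R \<Longrightarrow> partner x \<in> R"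
    and sr: "s \<in> R" "r \<notin> R"
  shows "M $ r $ s = 0"
proof -
  have M': "in_stab M" and s: "s \<in> Qsupp" using M R sr by (auto simp: reduced_off_def)
  show ?thesis
  proof (cases "r \<in> Qsupp")
    case True
    have "partner r \<notin> R" using R(2)[of "partner r"] sr by auto
    then have "unit_column M (partner r)" using M by (simp add: reduced_off_def)
    moreover have "matrix_inv M ** M = mat 1" using M' mgen_GQ_inverse by (auto simp: in_stab_def)
    ultimately have "unit_column (matrix_inv M) (partner r)" using unit_column_left_inverse by blast
    then have "matrix_inv M $ partner s $ partner r = 0" using sr by (auto simp: unit_column_def partner_eq_iff)
    then show ?thesis using stab_entry_relation[OF M' s, of r] True by simp
  qed (use stab_entry_relation[OF M' s, of r] in simp)
qed

lemma exists_Qdom_maximal: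
  assumes "finite R" "R \<noteq> {}"
  obtains v where "v \<in> R" "\<And>i. i \<in> R \<Longrightarrow> Qdom i v \<Longrightarrow> Qdom v i"
proof -
  define f where "f v = card {j \<in> R. Qdom j v}" for v
  have "Min (f ` R) \<in> f ` R" using assms by simp
  then obtain v where v: "v \<in> R" "f v = Min (f ` R)" by auto
  then have v_min: "f v \<le> f i" if "i \<in> R" for i using that assms by simp
  show ?thesis
  proof (rule that[OF v(1)])
    fix i assume i: "i \<in> R" "Qdom i v"
    have sub: "{j \<in> R. Qdom j i} \<subseteq> {j \<in> R. Qdom j v}" using i Qdom_trans by blast
    moreover have "card {j \<in> R. Qdom j v} \<le> card {j \<in> R. Qdom j i}" using v_min[OF i(1)] by (simp add: f_def)
    moreover have "card {j \<in> R. Qdom j i} \<le> card {j \<in> R. Qdom j v}"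
      using sub assms(1) by (intro card_mono) auto
    ultimately have "{j \<in> R. Qdom j i} = {j \<in> R. Qdom j v}"
      using assms(1) by (intro card_subset_eq) auto
    then show "Qdom v i" using v(1) Qdom_refl by blast
  qed
qed

text \<open>One step of the induction on \<open>R\<close>: \<open>v\<close> is \<open>Qdom\<close>-maximal in \<open>R\<close>, and \<open>reduced_rest\<close> is the
  induction hypothesis for \<open>R - {v, v*}\<close>.\<close>
context
  fixes R :: "'v set" and v :: 'v
  assumes R_Qsupp: "R \<subseteq> Qsupp" and R_partner: "\<And>x. x \<in> R \<Longrightarrow> partner x \<in> R"
    and v_R: "v \<in> R" and v_maximal: "\<And>i. i \<in> R \<Longrightarrow> Qdom i v \<Longrightarrow> Qdom v i"
    and reduced_rest: "\<And>M. reduced_off (R - {v, partner v}) M \<Longrightarrow> M \<in> mgen TQ"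
begin

lemma v_facts: "v \<in> Qsupp" "partner v \<in> R" "partner v \<in> Qsupp" "partner v \<noteq> v"
  using R_Qsupp v_R R_partner partner_neq[of v] by auto

lemma column_entry_Qdom:
  assumes M: "reduced_off R M" and i: "i \<in> R" "M $ i $ v \<noteq> 0"
  shows "Qdom i v" "Qdom v i"
proof -
  have "Qdom i v"
  proof (cases "i = v")
    case False
    then show ?thesis using stab_offdiag_Qdom(3) M i(2) by (auto simp: reduced_off_def)
  qed (simp add: Qdom_refl)
  then show "Qdom i v" "Qdom v i" using v_maximal i(1) by auto
qed

lemma reduce_partner_entry:
  assumes "reduced_off R M" "unit_column M v" "\<forall>i\<in>R - {v, partner v}. M $ i $ partner v = 0"
  shows "M \<in> mgen TQ"
  using assms
proof (induction "nat \<bar>M $ v $ partner v\<bar>" arbitrary: M rule: less_induct)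
  case less
  have M: "in_stab M" using less.prems(1) by (simp add: reduced_off_def)
  have diag: "M $ partner v $ partner v = 1"
    using stab_partner_diagonal[OF M v_facts(1) less.prems(2)] .
  show ?case
  proof (cases "M $ v $ partner v = 0")
    case True
    have "M $ k $ partner v = (if k = partner v then 1 else 0)" for k
      using diag True less.prems(3) v_facts
        reduced_off_column_zero_outside[OF less.prems(1) R_Qsupp R_partner v_facts(2), of k]
      by (cases "k \<in> R") auto
    then have "reduced_off (R - {v, partner v}) M"
      using less.prems(1,2) by (auto simp: reduced_off_def unit_column_def)
    then show ?thesis by (rule reduced_rest)
  next
    case False
    have "vd v (partner v)"
      using stab_offdiag_Qdom(3)[OF M _ False] v_facts by (auto simp: Qdom_def)
    obtain c where c: "c = 1 \<or> c = -1" "\<bar>M $ v $ partner v + c * 1\<bar> < \<bar>M $ v $ partner v\<bar>"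
      by (rule int_abs_decrease_by_unit[of 1 "M $ v $ partner v"]) (use False in auto)
    let ?t = "elementary v (partner v) c"
    have e: "(?t ** M) $ r $ s = M $ r $ s + (if r = v then c * M $ partner v $ s else 0)" for r s
      by (simp add: elementary_mult)
    show ?thesis
    proof (rule reduced_off_step[OF less.prems(1)])
      show "?t \<in> mgen TQ" using elementary_partner_in_mgen_TQ[OF v_facts(1) \<open>vd v (partner v)\<close> c(1)] .
      show "unit_column ?t x" if "x \<notin> R" for x using that v_facts by (intro unit_column_elementary) auto
      assume "reduced_off R (?t ** M)"
      moreover have "unit_column (?t ** M) v" using less.prems(2) v_facts by (auto simp: unit_column_def e)
      moreover have "\<forall>i\<in>R - {v, partner v}. (?t ** M) $ i $ partner v = 0" using less.prems(3) by (simp add: e)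
      moreover have "nat \<bar>(?t ** M) $ v $ partner v\<bar> < nat \<bar>M $ v $ partner v\<bar>" using c(2) diag by (simp add: e)
      ultimately show "?t ** M \<in> mgen TQ" using less.hyps by blast
    qed
  qed
qed

lemma reduce_unit_column:
  assumes "reduced_off R M" "unit_column M v"
  shows "M \<in> mgen TQ"
  using assms
proof (induction "column_weight (R - {v, partner v}) M (partner v)" arbitrary: M rule: less_induct)
  case less
  have M: "in_stab M" using less.prems(1) by (simp add: reduced_off_def)
  have diag: "M $ partner v $ partner v = 1"
    using stab_partner_diagonal[OF M v_facts(1) less.prems(2)] .
  show ?case
  proof (cases "\<forall>i\<in>R - {v, partner v}. M $ i $ partner v = 0")
    case True
    then show ?thesis using reduce_partner_entry less.prems by blast
  next
    case False
    then obtain i where i: "i \<in> R" "i \<noteq> v" "i \<noteq> partner v" "M $ i $ partner v \<noteq> 0" by auto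
    have iS: "i \<in> Qsupp" "partner i \<in> R" using R_Qsupp R_partner i by auto
    have pi: "partner i \<noteq> partner v" "partner i \<noteq> v" using i by (auto simp: partner_eq_iff)
    obtain c where c: "c = 1 \<or> c = -1" "\<bar>M $ i $ partner v + c * 1\<bar> < \<bar>M $ i $ partner v\<bar>"
      by (rule int_abs_decrease_by_unit[of 1 "M $ i $ partner v"]) (use i(4) in auto)
    let ?t = "Qtransv i (partner v) c"
    note e = Qtransv_mult[of i "partner v" c M, unfolded partner_partner]
    show ?thesis
    proof (rule reduced_off_step[OF less.prems(1)])
      show "?t \<in> mgen TQ"
        using mgen_generator[OF Qtransv_in_TQ[OF iS(1) v_facts(3) i(3) pi(1)
              stab_offdiag_Qdom(3)[OF M i(3,4)] c(1)]] .
      show "unit_column ?t x" if "x \<notin> R" for x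
        using that v_facts iS by (intro unit_column_Qtransv) auto
      assume "reduced_off R (?t ** M)"
      moreover have "unit_column (?t ** M) v"
        using less.prems(2) pi i v_facts by (auto simp: unit_column_def e)
      moreover have "column_weight (R - {v, partner v}) (?t ** M) (partner v)
          < column_weight (R - {v, partner v}) M (partner v)"
        by (rule column_weight_decrease[of _ i]) (use i c(2) diag in \<open>auto simp: e\<close>)
      ultimately show "?t ** M \<in> mgen TQ" using less.hyps by blast
    qed
  qed
qed

text \<open>Column \<open>v\<close> is already \<open>\<plusminus>e\<^sub>v\<close>; a \<open>Q\<close>-inversion fixes the sign.\<close>
lemma reduce_diagonal_column:
  assumes M: "reduced_off R M" and col: "\<forall>k. k \<noteq> v \<longrightarrow> M $ k $ v = 0"
  shows "M \<in> mgen TQ"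
proof -
  have "matrix_inv M ** M = mat 1" using M mgen_GQ_inverse by (auto simp: reduced_off_def in_stab_def)
  then have "M $ v $ v = 1 \<or> M $ v $ v = -1" using left_invertible_monomial_column col by blast
  then show ?thesis
  proof
    assume "M $ v $ v = 1"
    then show ?thesis using reduce_unit_column[OF M] col by (auto simp: unit_column_def)
  next
    assume neg: "M $ v $ v = -1"
    show ?thesis
    proof (rule reduced_off_step[OF M])
      show "Qinversion v \<in> mgen TQ" using mgen_generator[OF Qinversion_in_TQ[OF v_facts(1)]] .
      show "unit_column (Qinversion v) x" if "x \<notin> R" for x
        using that v_R v_facts by (intro unit_column_Qinversion) auto
      assume "reduced_off R (Qinversion v ** M)"
      moreover have "unit_column (Qinversion v ** M) v"
        using col neg v_facts by (auto simp: unit_column_def Qinversion_mult)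
      ultimately show "Qinversion v ** M \<in> mgen TQ" using reduce_unit_column by blast
    qed
  qed
qed

text \<open>Adding row \<open>v*\<close> to row \<open>v\<close> and then subtracting row \<open>v\<close> from row \<open>v*\<close> moves the
  only nonzero entry of column \<open>v\<close> from row \<open>v*\<close> to row \<open>v\<close>.\<close>
lemma reduce_partner_monomial_column:
  assumes M: "reduced_off R M" and pv: "M $ partner v $ v \<noteq> 0"
    and col: "\<forall>k. k \<noteq> partner v \<longrightarrow> M $ k $ v = 0"
  shows "M \<in> mgen TQ"
proof -
  have "Qdom (partner v) v" "Qdom v (partner v)" using column_entry_Qdom[OF M v_facts(2) pv] .
  then have vd: "vd v (partner v)" "vd (partner v) v" by (auto simp: Qdom_def)
  let ?t = "elementary (partner v) v (-1) ** elementary v (partner v) 1"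
  have e: "(?t ** M) $ r $ s = (M $ r $ s + (if r = v then M $ partner v $ s else 0))
      + (if r = partner v then - (M $ v $ s + M $ partner v $ s) else 0)" for r s
    using elementary_pair_mult[of "partner v" v "-1" v "partner v" 1 M r s] by simp
  show ?thesis
  proof (rule reduced_off_step[OF M])
    show "?t \<in> mgen TQ"
      using mgen_mult[OF elementary_partner_in_mgen_TQ[OF v_facts(3), of "-1"]
          elementary_partner_in_mgen_TQ[OF v_facts(1) vd(1), of 1]] vd(2)
      by simp
    show "unit_column ?t x" if "x \<notin> R" for x
      using that v_R v_facts by (intro unit_column_mult_closed unit_column_elementary) auto
    assume "reduced_off R (?t ** M)"
    moreover have "\<forall>k. k \<noteq> v \<longrightarrow> (?t ** M) $ k $ v = 0"
      using col v_facts by (auto simp: e)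
    ultimately show "?t ** M \<in> mgen TQ" using reduce_diagonal_column by blast
  qed
qed

text \<open>Adding row \<open>w\<close> to row \<open>v\<close> and then subtracting row \<open>v\<close> from row \<open>w\<close>, each time with
  the compensating transvection of rows \<open>w*\<close>, \<open>v*\<close> (whose entries in column \<open>v\<close> vanish),
  moves the only nonzero entry of column \<open>v\<close> from row \<open>w\<close> to row \<open>v\<close>.\<close>
lemma reduce_monomial_column:
  assumes M: "reduced_off R M" and w: "w \<in> R" "w \<noteq> v" "w \<noteq> partner v" "M $ w $ v \<noteq> 0"
    and col: "\<forall>k. k \<noteq> w \<longrightarrow> M $ k $ v = 0"
  shows "M \<in> mgen TQ"
proof -
  have wS: "w \<in> Qsupp" "partner w \<in> R" using w R_Qsupp R_partner by auto
  have wv: "Qdom w v" and vw: "Qdom v w" using column_entry_Qdom[OF M w(1,4)] .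
  have pw: "partner w \<noteq> v" "partner w \<noteq> w" using w(3) partner_neq[of w] by auto
  let ?t1 = "Qtransv v w 1" and ?t2 = "Qtransv w v (-1)"
  have c1: "(?t1 ** M) $ r $ v = (if r = v \<or> r = w then M $ w $ v else 0)" for r
    using col pw w(2,3) by (auto simp: Qtransv_mult)
  show ?thesis
  proof (rule reduced_off_step[OF M])
    show "?t1 \<in> mgen TQ"
      using mgen_generator[OF Qtransv_in_TQ[OF v_facts(1) wS(1) w(2)[symmetric] _ vw]] w(3) by auto
    show "unit_column ?t1 x" if "x \<notin> R" for x
      using that w(1) v_facts by (intro unit_column_Qtransv) auto
    assume M1: "reduced_off R (?t1 ** M)"
    show "?t1 ** M \<in> mgen TQ"
    proof (rule reduced_off_step[OF M1])
      show "?t2 \<in> mgen TQ"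
        using mgen_generator[OF Qtransv_in_TQ[OF wS(1) v_facts(1) w(2) pw(1) wv]] by simp
      show "unit_column ?t2 x" if "x \<notin> R" for x
        using that v_R wS by (intro unit_column_Qtransv) auto
      assume "reduced_off R (?t2 ** (?t1 ** M))"
      moreover have "\<forall>k. k \<noteq> v \<longrightarrow> (?t2 ** (?t1 ** M)) $ k $ v = 0"
        using pw w(2) by (auto simp: Qtransv_mult[of w v "-1" "?t1 ** M"] c1)
      ultimately show "?t2 ** (?t1 ** M) \<in> mgen TQ" using reduce_diagonal_column by blast
    qed
  qed
qed

lemma column_descent_partner:
  assumes M: "reduced_off R M" and u0: "u0 \<in> R" "M $ u0 $ v \<noteq> 0" "M $ partner u0 $ v \<noteq> 0"
  obtains t where "t \<in> mgen TQ" "\<And>x. x \<notin> R \<Longrightarrow> unit_column t x"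
    "column_weight R (t ** M) v < column_weight R M v"
proof -
  obtain u where u: "u \<in> R" "M $ u $ v \<noteq> 0" "M $ partner u $ v \<noteq> 0" "\<bar>M $ partner u $ v\<bar> \<le> \<bar>M $ u $ v\<bar>"
  proof (cases "\<bar>M $ partner u0 $ v\<bar> \<le> \<bar>M $ u0 $ v\<bar>")
    case True then show ?thesis using that u0 by blast
  next
    case False then show ?thesis using that[of "partner u0"] u0 R_partner by auto
  qed
  have uS: "u \<in> Qsupp" "partner u \<in> R" using u R_Qsupp R_partner by auto
  have "Qdom u (partner u)"
    using column_entry_Qdom[OF M u(1,2)] column_entry_Qdom[OF M uS(2) u(3)] Qdom_trans by blast
  then have vd: "vd u (partner u)" by (simp add: Qdom_def)
  obtain c where c: "c = 1 \<or> c = -1" "\<bar>M $ u $ v + c * M $ partner u $ v\<bar> < \<bar>M $ u $ v\<bar>"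
    using int_abs_decrease_by_unit[OF u(3,4)] by blast
  show ?thesis
  proof (rule that)
    show "elementary u (partner u) c \<in> mgen TQ" using elementary_partner_in_mgen_TQ[OF uS(1) vd c(1)] .
    show "unit_column (elementary u (partner u) c) x" if "x \<notin> R" for x
      using that uS by (intro unit_column_elementary) auto
    show "column_weight R (elementary u (partner u) c ** M) v < column_weight R M v"
      by (rule column_weight_decrease[OF _ u(1)]) (use c(2) in \<open>auto simp: elementary_mult\<close>)
  qed
qed

lemma column_descent_pair:
  assumes M: "reduced_off R M"
    and ij0: "i0 \<in> R" "j0 \<in> R" "i0 \<noteq> j0" "M $ i0 $ v \<noteq> 0" "M $ j0 $ v \<noteq> 0"
    and partners0: "M $ partner i0 $ v = 0" "M $ partner j0 $ v = 0"
  obtains t where "t \<in> mgen TQ" "\<And>x. x \<notin> R \<Longrightarrow> unit_column t x"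
    "column_weight R (t ** M) v < column_weight R M v"
proof -
  obtain i j where ij: "i \<in> R" "j \<in> R" "i \<noteq> j" "M $ i $ v \<noteq> 0" "M $ j $ v \<noteq> 0"
      and partners: "M $ partner i $ v = 0" "M $ partner j $ v = 0"
      and le: "\<bar>M $ j $ v\<bar> \<le> \<bar>M $ i $ v\<bar>"
  proof (cases "\<bar>M $ j0 $ v\<bar> \<le> \<bar>M $ i0 $ v\<bar>")
    case True then show ?thesis using that ij0 partners0 by blast
  next
    case False then show ?thesis using that[of j0 i0] ij0 partners0 by auto
  qed
  have ijS: "i \<in> Qsupp" "j \<in> Qsupp" "partner i \<in> R" using ij R_Qsupp R_partner by auto
  have pij: "partner i \<noteq> j" using partners(1) ij(5) by auto
  have "Qdom i j"
    using column_entry_Qdom[OF M ij(1,4)] column_entry_Qdom[OF M ij(2,5)] Qdom_trans by blast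
  obtain c where c: "c = 1 \<or> c = -1" "\<bar>M $ i $ v + c * M $ j $ v\<bar> < \<bar>M $ i $ v\<bar>"
    using int_abs_decrease_by_unit[OF ij(5) le] by blast
  have e: "(Qtransv i j c ** M) $ r $ v = M $ r $ v + (if r = i then c * M $ j $ v else 0)" for r
    using partners(1) by (simp add: Qtransv_mult)
  show ?thesis
  proof (rule that)
    show "Qtransv i j c \<in> mgen TQ"
      using mgen_generator[OF Qtransv_in_TQ[OF ijS(1,2) ij(3) pij \<open>Qdom i j\<close> c(1)]] .
    show "unit_column (Qtransv i j c) x" if "x \<notin> R" for x
      using that ij ijS by (intro unit_column_Qtransv) auto
    show "column_weight R (Qtransv i j c ** M) v < column_weight R M v"
      by (rule column_weight_decrease[OF _ ij(1)]) (use c(2) in \<open>auto simp: e\<close>)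
  qed
qed

text \<open>The Euclidean algorithm on column \<open>v\<close>: as long as two entries are nonzero, one of them
  can be decreased in absolute value by a transvection.\<close>
lemma reduce_column: "reduced_off R M \<Longrightarrow> M \<in> mgen TQ"
proof (induction "column_weight R M v" arbitrary: M rule: less_induct)
  case less
  have "matrix_inv M ** M = mat 1"
    using less.prems mgen_GQ_inverse by (auto simp: reduced_off_def in_stab_def)
  then obtain w where w: "M $ w $ v \<noteq> 0" using left_invertible_column_nonzero by blast
  have outside: "M $ r $ v = 0" if "r \<notin> R" for r
    using reduced_off_column_zero_outside[OF less.prems R_Qsupp R_partner v_R that] .
  then have wR: "w \<in> R" using w by blast
  show ?case
  proof (cases "\<exists>j\<in>R. j \<noteq> w \<and> M $ j $ v \<noteq> 0")
    case True
    then obtain j where j: "j \<in> R" "j \<noteq> w" "M $ j $ v \<noteq> 0" by blast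
    obtain t where t: "t \<in> mgen TQ" "\<And>x. x \<notin> R \<Longrightarrow> unit_column t x"
      "column_weight R (t ** M) v < column_weight R M v"
    proof (cases "M $ partner w $ v = 0 \<and> M $ partner j $ v = 0")
      case True
      then show ?thesis using column_descent_pair[OF less.prems wR j(1) j(2)[symmetric] w j(3)] that by blast
    next
      case False
      then show ?thesis using column_descent_partner[OF less.prems] wR w j(1,3) that by blast
    qed
    show ?thesis using reduced_off_step[OF less.prems t(1,2)] less.hyps[OF t(3)] by blast
  next
    case False
    then have col: "\<forall>k. k \<noteq> w \<longrightarrow> M $ k $ v = 0" using outside by blast
    consider "w = v" | "w = partner v" | "w \<noteq> v" "w \<noteq> partner v" by blast
    then show ?thesis
    proof cases
      case 1
      then show ?thesis using reduce_diagonal_column[OF less.prems] col by simp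
    next
      case 2
      then show ?thesis using reduce_partner_monomial_column[OF less.prems] w col by simp
    next
      case 3
      then show ?thesis using reduce_monomial_column[OF less.prems wR _ _ w col] by blast
    qed
  qed
qed

end

lemma reduced_off_in_mgen_TQ:
  assumes "R \<subseteq> Qsupp" "\<And>x. x \<in> R \<Longrightarrow> partner x \<in> R" "reduced_off R M"
  shows "M \<in> mgen TQ"
  using assms
proof (induction "card R" arbitrary: R M rule: less_induct)
  case less
  show ?case
  proof (cases "R = {}")
    case True
    then have "M = mat 1"
      using less.prems(3) by (simp add: reduced_off_def unit_column_def vec_eq_iff mat_1_entry)
    then show ?thesis by (simp add: mgen.one)
  next
    case False
    obtain v where v: "v \<in> R" "\<And>i. i \<in> R \<Longrightarrow> Qdom i v \<Longrightarrow> Qdom v i"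
      using exists_Qdom_maximal[of R] False by auto
    have "card (R - {v, partner v}) < card R" using v(1) by (intro psubset_card_mono) auto
    moreover have "R - {v, partner v} \<subseteq> Qsupp" using less.prems(1) by auto
    moreover have "\<And>x. x \<in> R - {v, partner v} \<Longrightarrow> partner x \<in> R - {v, partner v}"
      using less.prems(2) by (auto simp: partner_eq_iff)
    ultimately show ?thesis
      using reduce_column[OF less.prems(1,2) v] less.hyps less.prems(3) by blast
  qed
qed

lemma stabiliser_eq_mgen_TQ: "{A \<in> mgen GQ. act2 A Q = Q} = mgen TQ"
proof
  show "{A \<in> mgen GQ. act2 A Q = Q} \<subseteq> mgen TQ"
  proof
    fix A assume "A \<in> {A \<in> mgen GQ. act2 A Q = Q}"
    then have "reduced_off Qsupp A"
      using mgen_GQ_unit_column by (auto simp: reduced_off_def in_stab_def)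
    then show "A \<in> mgen TQ" using reduced_off_in_mgen_TQ[of Qsupp] by (auto simp: partner_Qsupp_iff)
  qed
  show "mgen TQ \<subseteq> {A \<in> mgen GQ. act2 A Q = Q}" using mgen_TQ_in_stab by (auto simp: in_stab_def)
qed

end

theorem theorem4p4:
  fixes adj :: "'v::finite \<Rightarrow> 'v \<Rightarrow> bool"
    and st :: "'v letter \<Rightarrow> 'v letter"
    and g :: nat
    and a :: "nat \<Rightarrow> 'v letter"
  assumes "is_graph adj"
    and "CARD('v) = 2 * g"
    and "bij st"
    and "\<And>u. st (st u) = linv u"
    and "fst ` (a ` {..<g} \<union> st ` a ` {..<g}) = UNIV"
    and "Qform adj st g a \<noteq> 0"
  shows "{A \<in> mgen (Ggens adj (Qform adj st g a)).
            act2 A (Qform adj st g a) = Qform adj st g a}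
         = mgen (std_transv adj st (Qform adj st g a) \<union> Q_inversions st (Qform adj st g a))"
proof -
  interpret Q_setting adj st g a
    using assms(1,2,4,5) by unfold_locales
  show ?thesis by (rule stabiliser_eq_mgen_TQ)
qed

end
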